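(* Let $k\geq 2$ be an integer and let $\gamma\geq 0$ be a real number. For finite sets $X$ and functions $f:X\to X$, write $f^k$ for the $k$-fold iterate of $f$. Then, as $n\to\infty$, \[\max_{\substack{f:X\to X\\ |X|=n}}\frac{\deg(f^k)}{\deg(f)^\gamma}\geq \frac{1+o(1)}{(k+1)^\gamma}\,n^{1-1/2^{k-1}}.\] Moreover, if $\gamma\geq 2-1/2^{k-1}$, then for every $n\geq 1$, \[\max_{\substack{f:X\to X\\ |X|=n}}\frac{\deg(f^k)}{\deg(f)^{\gamma}}\leq n^{1-1/2^{k-1}}.\]
   Context: For finite sets $X,Y$ and a function $f:X\to Y$, the degree (of noninjectivity/noninvertibility) of $f$ is $\deg(f)=\frac{1}{|X|}\sum_{x\in X}|f^{-1}(f(x))|=\frac{1}{|X|}\sum_{y\in Y}|f^{-1}(y)|^2$. The maxima range over all $n$-element sets $X$ and all functions $f:X\to X$. *)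

theory Defs
  imports Complex_Main
begin

text \<open>Degree of noninjectivity of a function f : X -> X on a finite set X
  (values of f outside X are irrelevant):
  deg f = (1/|X|) * sum over x in X of |f^{-1}(f x)|, preimages taken inside X.\<close>
definition fdeg :: "'a set \<Rightarrow> ('a \<Rightarrow> 'a) \<Rightarrow> real" where
  "fdeg X f = (\<Sum>x\<in>X. real (card {y\<in>X. f y = f x})) / real (card X)"

end

(*
  Let coll(h) = |X| deg(h) be the number of pairs (x, y) in X^2 with h x = h y.
  Grouping the pairs counted by coll(h o g) according to the values of g and using
  2ab <= a^2 + b^2 bounds coll(h o g) by (largest fiber of h) * coll(g), and a fiber
  of h has at most sqrt(coll h) elements.  Hence deg(h o g) <= sqrt(n deg h) deg g,
  and iterating with h = f^j gives deg(f^(j+1)) <= n^(1 - 2^-j) deg(f)^(2 - 2^-j),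
  which is the upper bound because deg f >= 1.

  For the lower bound let m = floor(n^(1/2^k)) and build a rooted tree of depth k
  in which each node of level i has b_i = m^(2^(k-1-i)) children.  Level i then has
  N_i nodes with N_i * b_i^2 = m^(2^k) <= n, so every level contributes about n
  collisions of f and deg f <= k + 1 + O(n^(-1/2)) after padding with fixed points,
  while f^k collapses the whole tree, of size at least N_k = m^(2^k - 1), onto the
  root, so deg(f^k) >= m^(2^(k+1) - 2) / n ~ n^(1 - 1/2^(k-1)).
*)
theory Submission
  imports Defs "HOL-Real_Asymp.Real_Asymp"
begin

section \<open>Counting collisions\<close>

definition fiber_size :: "'a set \<Rightarrow> ('a \<Rightarrow> 'b) \<Rightarrow> 'a \<Rightarrow> nat" where
  "fiber_size X h x = card {y\<in>X. h y = h x}"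

definition collisions :: "'a set \<Rightarrow> ('a \<Rightarrow> 'b) \<Rightarrow> nat" where
  "collisions X h = (\<Sum>x\<in>X. fiber_size X h x)"

lemma fdeg_eq_collisions: "fdeg X h = real (collisions X h) / real (card X)"
  by (simp add: fdeg_def collisions_def fiber_size_def)

lemma collisions_cong:
  assumes "\<And>x. x \<in> X \<Longrightarrow> g x = h x"
  shows "collisions X g = collisions X h"
proof -
  have "{y\<in>X. g y = g x} = {y\<in>X. h y = h x}" if "x \<in> X" for x
    using assms that by auto
  then show ?thesis
    unfolding collisions_def fiber_size_def by (intro sum.cong) auto
qed

lemma card_le_collisions:
  assumes "finite X"
  shows "card X \<le> collisions X h"
proof -
  have "1 \<le> fiber_size X h x" if "x \<in> X" for x
    using assms that by (auto simp: fiber_size_def Suc_le_eq card_gt_0_iff)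
  then have "(\<Sum>x\<in>X. 1) \<le> collisions X h"
    unfolding collisions_def by (intro sum_mono) auto
  then show ?thesis by simp
qed

lemma fdeg_ge_1:
  assumes "finite X" "X \<noteq> {}"
  shows "1 \<le> fdeg X h"
  using card_le_collisions[OF assms(1), of h] assms
  by (simp add: fdeg_eq_collisions card_gt_0_iff)

lemma fiber_size_sq_le_collisions:
  assumes "finite X" "x \<in> X"
  shows "fiber_size X h x ^ 2 \<le> collisions X h"
proof -
  have "fiber_size X h x ^ 2 = (\<Sum>y\<in>{y\<in>X. h y = h x}. fiber_size X h y)"
    by (simp add: fiber_size_def power2_eq_square)
  also have "\<dots> \<le> collisions X h"
    unfolding collisions_def using assms(1) by (intro sum_mono2) auto
  finally show ?thesis .
qed

lemma card_sq_le_collisions: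
  assumes "finite X" "S \<subseteq> X" "\<And>x. x \<in> S \<Longrightarrow> h x = c"
  shows "card S ^ 2 \<le> collisions X h"
proof -
  have "card S \<le> fiber_size X h x" if "x \<in> S" for x
    unfolding fiber_size_def using assms that by (intro card_mono) auto
  then have "(\<Sum>x\<in>S. card S) \<le> (\<Sum>x\<in>S. fiber_size X h x)"
    by (intro sum_mono)
  also have "\<dots> \<le> collisions X h"
    unfolding collisions_def using assms(1,2) by (intro sum_mono2) auto
  finally show ?thesis
    by (simp add: power2_eq_square)
qed

lemma collisions_const:
  assumes "\<And>x. x \<in> X \<Longrightarrow> h x = c"
  shows "collisions X h = card X ^ 2"
proof -
  have "{y\<in>X. h y = h x} = X" if "x \<in> X" for x
    using assms that by auto
  then show ?thesis
    by (simp add: collisions_def fiber_size_def power2_eq_square)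
qed

lemma collisions_inj_on:
  assumes "inj_on h X"
  shows "collisions X h = card X"
proof -
  have "{y\<in>X. h y = h x} = {x}" if "x \<in> X" for x
    using assms that by (auto dest: inj_onD)
  then show ?thesis
    by (simp add: collisions_def fiber_size_def)
qed

lemma collisions_Un_disjoint:
  assumes "finite A" "finite B" "A \<inter> B = {}" "h ` A \<inter> h ` B = {}"
  shows "collisions (A \<union> B) h = collisions A h + collisions B h"
proof -
  have "fiber_size (A \<union> B) h x = fiber_size A h x" if "x \<in> A" for x
  proof -
    have "{y\<in>A \<union> B. h y = h x} = {y\<in>A. h y = h x}"
      using assms(4) that by blast
    then show ?thesis by (simp add: fiber_size_def)
  qed
  moreover have "fiber_size (A \<union> B) h x = fiber_size B h x" if "x \<in> B" for x
  proof -
    have "{y\<in>A \<union> B. h y = h x} = {y\<in>B. h y = h x}"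
      using assms(4) that by blast
    then show ?thesis by (simp add: fiber_size_def)
  qed
  ultimately show ?thesis
    unfolding collisions_def using assms(1-3) by (simp add: sum.union_disjoint)
qed

lemma collisions_Un_separated:
  assumes "finite A" "finite B" "A \<inter> B = {}" "h ` A \<subseteq> C" "h ` B \<subseteq> D" "C \<inter> D = {}"
  shows "collisions (A \<union> B) h = collisions A h + collisions B h"
proof (rule collisions_Un_disjoint[OF assms(1-3)])
  have "h ` A \<inter> h ` B \<subseteq> C \<inter> D"
    using assms(4,5) by (rule Int_mono)
  with assms(6) show "h ` A \<inter> h ` B = {}"
    by (simp only: subset_empty)
qed

lemma sum_comp_eq_sum_fiber_card:
  fixes F :: "'b \<Rightarrow> 'c::comm_semiring_1"
  assumes "finite X" "finite Y" "g ` X \<subseteq> Y"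
  shows "(\<Sum>x\<in>X. F (g x)) = (\<Sum>w\<in>Y. of_nat (card {x\<in>X. g x = w}) * F w)"
  using sum.group[OF assms, of "\<lambda>x. F (g x)"] by simp

lemma collisions_eq_sum_fiber_card_sq:
  assumes "finite X" "finite Y" "h ` X \<subseteq> Y"
  shows "collisions X h = (\<Sum>w\<in>Y. card {x\<in>X. h x = w} ^ 2)"
  using sum_comp_eq_sum_fiber_card[OF assms, of "\<lambda>w. card {y\<in>X. h y = w}"]
  by (simp add: collisions_def fiber_size_def power2_eq_square)

section \<open>Collisions of a composition and the upper bound\<close>

lemma symmetric_form_le_weighted_sum_sq:
  fixes K :: "'a \<Rightarrow> 'a \<Rightarrow> real" and a :: "'a \<Rightarrow> real"
  assumes "\<And>w w'. K w w' = K w' w" "\<And>w w'. 0 \<le> K w w'"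
  shows "(\<Sum>w\<in>S. \<Sum>w'\<in>S. K w w' * (a w * a w')) \<le> (\<Sum>w\<in>S. a w ^ 2 * (\<Sum>w'\<in>S. K w w'))"
proof -
  have "(\<Sum>w\<in>S. \<Sum>w'\<in>S. K w w' * (a w * a w'))
      \<le> (\<Sum>w\<in>S. \<Sum>w'\<in>S. K w w' * ((a w ^ 2 + a w' ^ 2) / 2))"
    using assms(2) sum_squares_bound by (intro sum_mono mult_left_mono) (simp_all add: field_simps)
  also have "\<dots> = ((\<Sum>w\<in>S. \<Sum>w'\<in>S. K w w' * a w ^ 2) + (\<Sum>w\<in>S. \<Sum>w'\<in>S. K w w' * a w' ^ 2)) / 2"
    by (simp add: sum_divide_distrib sum.distrib add_divide_distrib distrib_left)
  also have "(\<Sum>w\<in>S. \<Sum>w'\<in>S. K w w' * a w' ^ 2) = (\<Sum>w\<in>S. \<Sum>w'\<in>S. K w w' * a w ^ 2)"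
    by (subst sum.swap) (simp add: assms(1))
  also have "((\<Sum>w\<in>S. \<Sum>w'\<in>S. K w w' * a w ^ 2) + (\<Sum>w\<in>S. \<Sum>w'\<in>S. K w w' * a w ^ 2)) / 2
      = (\<Sum>w\<in>S. a w ^ 2 * (\<Sum>w'\<in>S. K w w'))"
    by (simp add: sum_distrib_right mult.commute)
  finally show ?thesis .
qed

lemma collisions_comp_le:
  assumes X: "finite X" and gX: "g ` X \<subseteq> X"
  shows "real (collisions X (h \<circ> g)) \<le> sqrt (real (collisions X h)) * real (collisions X g)"
proof -
  define m where "m w = real (card {x\<in>X. g x = w})" for w
  define K where "K w w' = (of_bool (h w = h w') :: real)" for w w'
  have fiber_comp: "real (card {y\<in>X. h (g y) = v}) = (\<Sum>w\<in>X. m w * of_bool (h w = v))" for v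
    using sum_comp_eq_sum_fiber_card[OF X X gX, of "\<lambda>w. of_bool (h w = v) :: real"] X
    by (simp add: m_def Int_def)
  have "real (collisions X (h \<circ> g)) = (\<Sum>x\<in>X. \<Sum>w'\<in>X. m w' * K w' (g x))"
    by (simp add: collisions_def fiber_size_def fiber_comp K_def)
  also have "\<dots> = (\<Sum>w\<in>X. m w * (\<Sum>w'\<in>X. m w' * K w' w))"
    using sum_comp_eq_sum_fiber_card[OF X X gX, of "\<lambda>w. \<Sum>w'\<in>X. m w' * K w' w"]
    by (simp add: m_def)
  also have "\<dots> = (\<Sum>w\<in>X. \<Sum>w'\<in>X. K w w' * (m w * m w'))"
    by (simp add: sum_distrib_left K_def eq_commute mult_ac)
  also have "\<dots> \<le> (\<Sum>w\<in>X. m w ^ 2 * (\<Sum>w'\<in>X. K w w'))"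
    by (rule symmetric_form_le_weighted_sum_sq) (auto simp: K_def)
  also have "\<dots> \<le> (\<Sum>w\<in>X. m w ^ 2 * sqrt (real (collisions X h)))"
  proof (intro sum_mono mult_left_mono)
    fix w assume "w \<in> X"
    then have "real (fiber_size X h w) ^ 2 \<le> real (collisions X h)"
      using fiber_size_sq_le_collisions[OF X] by (metis of_nat_le_iff of_nat_power)
    then show "(\<Sum>w'\<in>X. K w w') \<le> sqrt (real (collisions X h))"
      using X by (simp add: K_def fiber_size_def real_le_rsqrt Int_def eq_commute)
  qed simp
  also have "\<dots> = sqrt (real (collisions X h)) * real (collisions X g)"
    using collisions_eq_sum_fiber_card_sq[OF X X gX]
    by (simp add: m_def sum_distrib_left mult.commute)
  finally show ?thesis .
qed

lemma fdeg_comp_le: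
  assumes "finite X" "g ` X \<subseteq> X"
  shows "fdeg X (h \<circ> g) \<le> sqrt (real (card X) * fdeg X h) * fdeg X g"
proof (cases "X = {}")
  case False
  then have n: "real (card X) > 0"
    using assms(1) by (simp add: card_gt_0_iff)
  have "fdeg X (h \<circ> g) \<le> sqrt (real (collisions X h)) * real (collisions X g) / real (card X)"
    unfolding fdeg_eq_collisions using n by (intro divide_right_mono collisions_comp_le[OF assms]) simp
  also have "\<dots> = sqrt (real (card X) * fdeg X h) * fdeg X g"
    using n by (simp add: fdeg_eq_collisions)
  finally show ?thesis .
qed (simp add: fdeg_def)

lemma fdeg_funpow_le:
  assumes X: "finite X" "X \<noteq> {}" and fX: "f ` X \<subseteq> X"
  shows "fdeg X (f ^^ Suc j) \<le> real (card X) powr (1 - 1 / 2 ^ j) * fdeg X f powr (2 - 1 / 2 ^ j)"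
proof (induction j)
  case 0
  show ?case
    using fdeg_ge_1[OF X, of f] X by (simp add: card_gt_0_iff)
next
  case (Suc j)
  define n where "n = real (card X)"
  define d where "d = fdeg X f"
  define a :: real where "a = 1 - 1 / 2 ^ j"
  define b :: real where "b = 2 - 1 / 2 ^ j"
  have n: "n > 0" and d: "d \<ge> 1"
    using X fdeg_ge_1[OF X, of f] by (simp_all add: n_def d_def card_gt_0_iff)
  have IH: "fdeg X (f ^^ Suc j) \<le> n powr a * d powr b"
    using Suc.IH by (simp only: n_def d_def a_def b_def)
  have "fdeg X (f ^^ Suc (Suc j)) \<le> sqrt (n * fdeg X (f ^^ Suc j)) * d"
    using fdeg_comp_le[OF X(1) fX, of "f ^^ Suc j"] by (simp only: funpow_Suc_right n_def d_def)
  also have "\<dots> \<le> sqrt (n * (n powr a * d powr b)) * d"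
    using IH n d by (intro mult_right_mono real_sqrt_le_mono mult_left_mono) simp_all
  also have "sqrt (n * (n powr a * d powr b)) = (n powr (1 + a) * d powr b) powr (1 / 2)"
    using n d by (simp add: powr_half_sqrt powr_add)
  also have "\<dots> * d = n powr ((1 + a) / 2) * (d powr (b / 2) * d)"
    using n d by (simp add: powr_mult powr_powr powr_add[symmetric] add_divide_distrib)
  also have "d powr (b / 2) * d = d powr (b / 2 + 1)"
    using d by (simp add: powr_add)
  also have "(1 + a) / 2 = 1 - 1 / 2 ^ Suc j"
    by (simp add: a_def field_simps)
  also have "b / 2 + 1 = 2 - 1 / 2 ^ Suc j"
    by (simp add: b_def field_simps)
  finally show ?case by (simp only: n_def d_def)
qed

lemma fdeg_funpow_ratio_le:
  fixes \<gamma> :: real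
  assumes k: "k \<ge> 1" and \<gamma>: "\<gamma> \<ge> 2 - 1 / 2 ^ (k - 1)"
    and X: "finite X" "X \<noteq> {}" and fX: "f ` X \<subseteq> X"
  shows "fdeg X (f ^^ k) / fdeg X f powr \<gamma> \<le> real (card X) powr (1 - 1 / 2 ^ (k - 1))"
proof -
  have d: "fdeg X f \<ge> 1"
    using fdeg_ge_1[OF X] .
  have "fdeg X (f ^^ k) \<le> real (card X) powr (1 - 1 / 2 ^ (k - 1)) * fdeg X f powr (2 - 1 / 2 ^ (k - 1))"
    using fdeg_funpow_le[OF X fX, of "k - 1"] k by simp
  also have "\<dots> \<le> real (card X) powr (1 - 1 / 2 ^ (k - 1)) * fdeg X f powr \<gamma>"
    using d \<gamma> by (intro mult_left_mono powr_mono) auto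
  finally show ?thesis
    using d by (simp add: divide_le_eq)
qed

section \<open>A layered tree with few collisions\<close>

lemma funpow_in_invariant:
  assumes "f ` S \<subseteq> S" "x \<in> S"
  shows "(f ^^ m) x \<in> S"
  using assms by (induction m) auto

lemma funpow_cong_invariant:
  assumes "f ` S \<subseteq> S" "\<And>x. x \<in> S \<Longrightarrow> g x = f x" "x \<in> S"
  shows "(g ^^ m) x = (f ^^ m) x"
  using assms by (induction m) (auto simp: funpow_in_invariant)

lemma block_map_image:
  fixes a b c N :: nat
  shows "(\<lambda>y. b + (y - a) div c) ` {a..<a + N * c} \<subseteq> {b..<b + N}"
proof (rule image_subsetI)
  fix y assume "y \<in> {a..<a + N * c}"
  then have "y - a < N * c"
    by auto
  then show "b + (y - a) div c \<in> {b..<b + N}"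
    using less_mult_imp_div_less by simp
qed

lemma collisions_block_map:
  fixes a b c N :: nat
  assumes "0 < c"
  shows "collisions {a..<a + N * c} (\<lambda>y. b + (y - a) div c) = N * c ^ 2"
proof (induction N)
  case (Suc N)
  let ?h = "\<lambda>y. b + (y - a) div c"
  have last_block: "?h y = b + N" if "y \<in> {a + N * c..<a + Suc N * c}" for y
  proof -
    have "c * N \<le> y - a" "y - a < c * Suc N"
      using that by (simp_all add: mult.commute le_diff_conv2 less_diff_conv2)
    then have "(y - a) div c = N"
      by (rule div_nat_eqI)
    then show ?thesis by simp
  qed
  have split: "{a..<a + Suc N * c} = {a..<a + N * c} \<union> {a + N * c..<a + Suc N * c}"
    by (rule ivl_disj_un_two(3)[symmetric]) simp_all
  have last_image: "?h ` {a + N * c..<a + Suc N * c} \<subseteq> {b + N}"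
    using last_block by auto
  have "collisions {a..<a + Suc N * c} ?h
      = collisions {a..<a + N * c} ?h + collisions {a + N * c..<a + Suc N * c} ?h"
    unfolding split by (rule collisions_Un_separated[OF _ _ _ block_map_image last_image]) auto
  also have "collisions {a + N * c..<a + Suc N * c} ?h = c ^ 2"
    using collisions_const[of "{a + N * c..<a + Suc N * c}" ?h "b + N"] last_block by simp
  also note Suc.IH
  finally show ?case by simp
qed (simp add: collisions_def)

lemma collisions_graft:
  fixes f :: "nat \<Rightarrow> nat"
  assumes f: "f ` {..<S} \<subseteq> {..<A}" and S: "S = A + N" and c: "0 < c"
  shows "collisions {..<S + N * c} (\<lambda>y. if y < S then f y else A + (y - S) div c)
    = collisions {..<S} f + N * c ^ 2"
proof -
  let ?f' = "\<lambda>y. if y < S then f y else A + (y - S) div c"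
  have "?f' ` {..<S} = f ` {..<S}" and "?f' ` {S..<S + N * c} = (\<lambda>y. A + (y - S) div c) ` {S..<S + N * c}"
    by (auto intro: image_cong)
  then have "?f' ` {..<S} \<subseteq> {..<A}" and "?f' ` {S..<S + N * c} \<subseteq> {A..<A + N}"
    using f block_map_image[where a=S and b=A and c=c and N=N] by simp_all
  moreover have split: "{..<S + N * c} = {..<S} \<union> {S..<S + N * c}"
    by auto
  ultimately have "collisions {..<S + N * c} ?f' = collisions {..<S} ?f' + collisions {S..<S + N * c} ?f'"
    unfolding split by (intro collisions_Un_separated) auto
  also have "collisions {..<S} ?f' = collisions {..<S} f"
    by (rule collisions_cong) simp
  also have "collisions {S..<S + N * c} ?f' = collisions {S..<S + N * c} (\<lambda>y. A + (y - S) div c)"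
    by (rule collisions_cong) simp
  also have "\<dots> = N * c ^ 2"
    using collisions_block_map[OF c] .
  finally show ?thesis .
qed

lemma graft_range_funpow:
  fixes f :: "nat \<Rightarrow> nat" and c :: nat
  assumes f: "f ` {..<S} \<subseteq> {..<A}" and S: "S = A + N" and root: "\<forall>x<S. (f ^^ j) x = r"
  defines "f' \<equiv> \<lambda>y. if y < S then f y else A + (y - S) div c"
  shows "f' ` {..<S + N * c} \<subseteq> {..<S}" and "\<forall>x<S + N * c. (f' ^^ Suc j) x = r"
proof -
  have "{..<S + N * c} = {..<S} \<union> {S..<S + N * c}"
    by auto
  then have "f' ` {..<S + N * c} = f' ` {..<S} \<union> f' ` {S..<S + N * c}"
    by (simp only: image_Un)
  also have "\<dots> \<subseteq> {..<A} \<union> {A..<S}"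
  proof (rule Un_mono)
    show "f' ` {..<S} \<subseteq> {..<A}"
      using f by (auto simp: f'_def)
    show "f' ` {S..<S + N * c} \<subseteq> {A..<S}"
      using block_map_image[where a=S and b=A and c=c and N=N] S by (auto simp: f'_def)
  qed
  also have "\<dots> \<subseteq> {..<S}"
    using S by auto
  finally show f'_range: "f' ` {..<S + N * c} \<subseteq> {..<S}" .
  have "f ` {..<S} \<subseteq> {..<S}"
    using f S by auto
  moreover have "f' x < S" if "x < S + N * c" for x
    using f'_range that by (simp add: image_subset_iff)
  ultimately have "(f' ^^ j) (f' x) = (f ^^ j) (f' x)" if "x < S + N * c" for x
    using that by (intro funpow_cong_invariant[where S="{..<S}"]) (auto simp: f'_def)
  then show "\<forall>x<S + N * c. (f' ^^ Suc j) x = r"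
    using root \<open>\<And>x. x < S + N * c \<Longrightarrow> f' x < S\<close>
    by (simp del: funpow.simps add: funpow_Suc_right)
qed

text \<open>The tree occupies the numbers below \<open>\<Sum>i\<le>j. N i\<close>, level \<open>i\<close> being the \<open>N i\<close> numbers
  after the lower levels.  Each node of level \<open>i + 1\<close> is mapped to its parent, and the root
  \<open>0\<close> is a fixed point; it lies in the fiber of its own \<open>b 0\<close> children, whence the
  term \<open>2 * b 0 + 1\<close>.\<close>

lemma layered_tree_exists:
  fixes b :: "nat \<Rightarrow> nat"
  assumes b: "\<And>i. 0 < b i" and j: "0 < j"
  defines "N i \<equiv> \<Prod>l<i. b l"
  shows "\<exists>f. f ` {..<\<Sum>i\<le>j. N i} \<subseteq> {..<\<Sum>i<j. N i}
    \<and> (\<forall>x<(\<Sum>i\<le>j. N i). (f ^^ j) x = 0)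
    \<and> collisions {..<\<Sum>i\<le>j. N i} f = 2 * b 0 + 1 + (\<Sum>i<j. N i * b i ^ 2)"
  using j
proof (induction j rule: nat_induct_non_zero)
  case 1
  have "collisions {..<1 + b 0} (\<lambda>_. 0::nat) = (1 + b 0) ^ 2"
    using collisions_const[of "{..<1 + b 0}" "\<lambda>_. 0::nat" 0] by simp
  then show ?case
    by (intro exI[of _ "\<lambda>_. 0"]) (auto simp: N_def power2_eq_square algebra_simps)
next
  case (Suc j)
  define A where "A = (\<Sum>i<j. N i)"
  define S where "S = (\<Sum>i\<le>j. N i)"
  have S: "S = A + N j" and S_Suc: "(\<Sum>i\<le>Suc j. N i) = S + N j * b j"
    by (simp_all add: A_def S_def lessThan_Suc_atMost[symmetric] N_def)
  from Suc.IH obtain f where f: "f ` {..<S} \<subseteq> {..<A}" and root: "\<forall>x<S. (f ^^ j) x = 0"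
    and coll: "collisions {..<S} f = 2 * b 0 + 1 + (\<Sum>i<j. N i * b i ^ 2)"
    unfolding A_def S_def by blast
  define f' where "f' = (\<lambda>y. if y < S then f y else A + (y - S) div b j)"
  have "f' ` {..<S + N j * b j} \<subseteq> {..<S}" and "\<forall>x<S + N j * b j. (f' ^^ Suc j) x = 0"
    using graft_range_funpow[OF f S root] unfolding f'_def by blast+
  moreover have "collisions {..<S + N j * b j} f' = collisions {..<S} f + N j * b j ^ 2"
    unfolding f'_def using collisions_graft[OF f S b] .
  moreover have "(\<Sum>i<Suc j. N i) = S"
    by (simp add: S_def lessThan_Suc_atMost)
  ultimately show ?case
    using coll S_Suc by (intro exI[of _ f']) simp
qed

lemma collisions_extend_id:
  fixes f :: "nat \<Rightarrow> nat"
  assumes f: "f ` {..<S} \<subseteq> {..<S}" and "S \<le> n"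
  shows "collisions {..<n} (\<lambda>y. if y < S then f y else y) = collisions {..<S} f + (n - S)"
proof -
  let ?F = "\<lambda>y. if y < S then f y else y"
  have low: "?F ` {..<S} \<subseteq> {..<S}"
    using f by (auto simp: image_subset_iff)
  have high: "?F ` {S..<n} \<subseteq> {S..<n}"
    by (auto simp: image_subset_iff)
  have split: "{..<n} = {..<S} \<union> {S..<n}"
    using assms(2) by auto
  have "collisions {..<n} ?F = collisions {..<S} ?F + collisions {S..<n} ?F"
    unfolding split by (rule collisions_Un_separated[OF _ _ _ low high]) auto
  also have "collisions {..<S} ?F = collisions {..<S} f"
    by (rule collisions_cong) simp
  also have "collisions {S..<n} ?F = n - S"
    by (subst collisions_inj_on) (auto simp: inj_on_def)
  finally show ?thesis .
qed

lemma power_levels: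
  fixes k m :: nat
  assumes "1 \<le> k"
  defines "b i \<equiv> m ^ 2 ^ (k - Suc i)"
  defines "N i \<equiv> \<Prod>l<i. b l"
  shows "\<And>i. i < k \<Longrightarrow> N i * b i ^ 2 = m ^ 2 ^ k" and "N k * m = m ^ 2 ^ k"
proof -
  have b_sq: "b i = b (Suc i) ^ 2" if "Suc i < k" for i
  proof -
    have "(2::nat) ^ (k - Suc i) = 2 ^ (k - Suc (Suc i)) * 2"
      using that by (simp flip: power_Suc2 add: Suc_diff_Suc)
    then show ?thesis
      by (simp add: b_def power_mult)
  qed
  show levels: "N i * b i ^ 2 = m ^ 2 ^ k" if "i < k" for i
    using that
  proof (induction i)
    case 0
    have "(2::nat) ^ k = 2 ^ (k - 1) * 2"
      using assms(1) by (simp flip: power_Suc2)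
    then show ?case
      by (simp add: N_def b_def power_mult)
  next
    case (Suc i)
    have "N (Suc i) * b (Suc i) ^ 2 = N i * b i * b (Suc i) ^ 2"
      by (simp add: N_def)
    also have "\<dots> = N i * b i ^ 2"
      using b_sq[OF Suc.prems] by (simp add: power2_eq_square)
    finally show ?case
      using Suc by simp
  qed
  have "N k = N (k - 1) * m"
    using assms(1) by (cases k) (simp_all add: N_def b_def)
  then show "N k * m = m ^ 2 ^ k"
    using levels[of "k - 1"] assms(1) by (simp add: b_def power2_eq_square mult.assoc)
qed

lemma power_tree_exists:
  fixes k m :: nat
  assumes k: "1 \<le> k" and m: "k + 1 \<le> m"
  shows "\<exists>S f. m ^ (2 ^ k - 1) \<le> S \<and> S \<le> m ^ 2 ^ k \<and> f ` {..<S} \<subseteq> {..<S}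
    \<and> (\<forall>x<S. (f ^^ k) x = 0) \<and> collisions {..<S} f = 2 * m ^ 2 ^ (k - 1) + 1 + k * m ^ 2 ^ k"
proof -
  define b where "b i = m ^ 2 ^ (k - Suc i)" for i
  define N where "N i = (\<Prod>l<i. b l)" for i
  define S where "S = (\<Sum>i\<le>k. N i)"
  have b_pos: "0 < b i" for i
    using m by (simp add: b_def)
  have levels: "N i * b i ^ 2 = m ^ 2 ^ k" if "i < k" for i
    using power_levels(1)[OF k that] by (simp add: b_def N_def)
  have top: "N k * m = m ^ 2 ^ k"
    using power_levels(2)[OF k] by (simp add: b_def N_def)
  obtain f where f: "f ` {..<S} \<subseteq> {..<\<Sum>i<k. N i}" and root: "\<forall>x<S. (f ^^ k) x = 0"
    and coll: "collisions {..<S} f = 2 * b 0 + 1 + (\<Sum>i<k. N i * b i ^ 2)"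
    using layered_tree_exists[of b k, OF b_pos] k unfolding S_def N_def by auto
  have "(\<Sum>i<k. N i) \<le> S"
    unfolding S_def by (intro sum_mono2) auto
  then have f_S: "f ` {..<S} \<subseteq> {..<S}"
    using f by (meson lessThan_subset_iff order_trans)
  have N_le: "N i \<le> N k" if "i \<le> k" for i
  proof (rule dvd_imp_le)
    show "N i dvd N k"
      unfolding N_def using that by (intro prod_dvd_prod_subset) auto
    show "0 < N k"
      using b_pos by (simp add: N_def)
  qed
  have "S \<le> (k + 1) * N k"
    unfolding S_def using sum_bounded_above[of "{..k}" N "N k"] N_le by simp
  also have "\<dots> \<le> m ^ 2 ^ k"
    using m top by (metis mult_le_mono1 mult.commute)
  finally have "S \<le> m ^ 2 ^ k" .
  moreover have "m ^ (2 ^ k - 1) * m = N k * m"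
    using top power_minus_mult[of "2 ^ k" m] by simp
  then have "m ^ (2 ^ k - 1) \<le> S"
    using m member_le_sum[of k "{..k}" N] by (simp add: S_def)
  moreover have "collisions {..<S} f = 2 * m ^ 2 ^ (k - 1) + 1 + k * m ^ 2 ^ k"
    using coll levels by (simp add: b_def)
  ultimately show ?thesis
    using f_S root by blast
qed

lemma exists_map_with_collision_bounds:
  fixes k m n :: nat
  assumes k: "1 \<le> k" and m: "k + 1 \<le> m" and n: "m ^ 2 ^ k \<le> n"
  shows "\<exists>F. F ` {..<n} \<subseteq> {..<n}
    \<and> collisions {..<n} F \<le> 2 * m ^ 2 ^ (k - 1) + 1 + (k + 1) * n
    \<and> (m ^ (2 ^ k - 1)) ^ 2 \<le> collisions {..<n} (F ^^ k)"
proof -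
  obtain S f where S: "m ^ (2 ^ k - 1) \<le> S" "S \<le> m ^ 2 ^ k" and f_S: "f ` {..<S} \<subseteq> {..<S}"
    and root: "\<forall>x<S. (f ^^ k) x = 0"
    and coll: "collisions {..<S} f = 2 * m ^ 2 ^ (k - 1) + 1 + k * m ^ 2 ^ k"
    using power_tree_exists[OF k m] by blast
  have "S \<le> n"
    using S n by simp
  define F where "F = (\<lambda>y. if y < S then f y else y)"
  have F_range: "F ` {..<n} \<subseteq> {..<n}"
    using f_S \<open>S \<le> n\<close> by (fastforce simp: F_def image_subset_iff)
  have "collisions {..<n} F = 2 * m ^ 2 ^ (k - 1) + 1 + k * m ^ 2 ^ k + (n - S)"
    using collisions_extend_id[OF f_S \<open>S \<le> n\<close>] coll by (simp add: F_def)
  also have "\<dots> \<le> 2 * m ^ 2 ^ (k - 1) + 1 + (k + 1) * n"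
    using mult_le_mono2[OF n, of k] diff_le_self[of n S] by (simp only: distrib_right mult_1_left)
  finally have coll_F: "collisions {..<n} F \<le> 2 * m ^ 2 ^ (k - 1) + 1 + (k + 1) * n" .
  have "(F ^^ k) x = 0" if "x \<in> {..<S}" for x
    using funpow_cong_invariant[OF f_S _ that, of F k] root that by (simp add: F_def)
  then have "S ^ 2 \<le> collisions {..<n} (F ^^ k)"
    using card_sq_le_collisions[of "{..<n}" "{..<S}" "F ^^ k" 0] \<open>S \<le> n\<close> by auto
  moreover have "(m ^ (2 ^ k - 1)) ^ 2 \<le> S ^ 2"
    using S(1) by (rule power_mono) simp
  ultimately show ?thesis
    using F_range coll_F by (meson order_trans)
qed

lemma exists_map_with_fdeg_bounds:
  fixes k m n :: nat
  assumes k: "1 \<le> k" and m: "k + 1 \<le> m" and n: "m ^ 2 ^ k \<le> n"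
  shows "\<exists>F. F ` {..<n} \<subseteq> {..<n}
    \<and> fdeg {..<n} F \<le> real (k + 1) + 3 / sqrt (real n)
    \<and> real m ^ (2 * 2 ^ k - 2) / real n \<le> fdeg {..<n} (F ^^ k)"
proof -
  obtain F where F: "F ` {..<n} \<subseteq> {..<n}"
    and coll_F: "collisions {..<n} F \<le> 2 * m ^ 2 ^ (k - 1) + 1 + (k + 1) * n"
    and coll_Fk: "(m ^ (2 ^ k - 1)) ^ 2 \<le> collisions {..<n} (F ^^ k)"
    using exists_map_with_collision_bounds[OF k m n] by blast
  define s where "s = sqrt (real n)"
  have "1 \<le> m ^ 2 ^ k"
    using m by simp
  then have n_pos: "0 < real n" and s: "1 \<le> s" and n_s: "real n = s ^ 2"
    using n by (simp_all add: s_def)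
  have "real (m ^ 2 ^ (k - 1)) ^ 2 = real (m ^ 2 ^ k)"
    using k by (simp flip: power_mult power_Suc2)
  then have "real (m ^ 2 ^ (k - 1)) ^ 2 \<le> s ^ 2"
    using n n_s by linarith
  then have root_fiber: "real (m ^ 2 ^ (k - 1)) \<le> s"
    using s by (simp add: power2_le_iff_abs_le)
  have "real (collisions {..<n} F) \<le> 2 * real (m ^ 2 ^ (k - 1)) + 1 + real (k + 1) * real n"
    using coll_F
    by (simp only: of_nat_le_iff[symmetric, where 'a=real] of_nat_add of_nat_mult of_nat_1 of_nat_numeral)
  then have "fdeg {..<n} F \<le> (2 * s + 1 + real (k + 1) * s ^ 2) / s ^ 2"
    unfolding fdeg_eq_collisions card_lessThan n_s[symmetric]
    using root_fiber by (intro divide_right_mono) simp_all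
  also have "\<dots> \<le> real (k + 1) + 3 / s"
    using s by (simp add: field_simps power2_eq_square)
  finally have "fdeg {..<n} F \<le> real (k + 1) + 3 / sqrt (real n)"
    by (simp add: s_def)
  moreover have "(2 ^ k - 1) * 2 = 2 * 2 ^ k - (2::nat)"
    by (simp add: diff_mult_distrib)
  then have "m ^ (2 * 2 ^ k - 2) \<le> collisions {..<n} (F ^^ k)"
    using coll_Fk by (metis power_mult)
  then have "real m ^ (2 * 2 ^ k - 2) / real n \<le> fdeg {..<n} (F ^^ k)"
    unfolding fdeg_eq_collisions card_lessThan
    using n_pos by (intro divide_right_mono) (simp_all flip: of_nat_power)
  ultimately show ?thesis
    using F by blast
qed

lemma exists_fdeg_ratio_ge:
  fixes k m n :: nat and \<gamma> :: real
  assumes k: "1 \<le> k" and \<gamma>: "0 \<le> \<gamma>" and m: "k + 1 \<le> m" and n: "m ^ 2 ^ k \<le> n"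
  shows "\<exists>(X :: nat set) f. finite X \<and> card X = n \<and> f ` X \<subseteq> X \<and>
    real m ^ (2 * 2 ^ k - 2) / real n / (real (k + 1) + 3 / sqrt (real n)) powr \<gamma>
      \<le> fdeg X (f ^^ k) / fdeg X f powr \<gamma>"
proof -
  obtain F where F: "F ` {..<n} \<subseteq> {..<n}"
    and deg_F: "fdeg {..<n} F \<le> real (k + 1) + 3 / sqrt (real n)"
    and deg_Fk: "real m ^ (2 * 2 ^ k - 2) / real n \<le> fdeg {..<n} (F ^^ k)"
    using exists_map_with_fdeg_bounds[OF k m n] by blast
  have "0 < n"
    using m n by (metis add_is_0 le_0_eq neq0_conv power_eq_0_iff zero_neq_one)
  then have "1 \<le> fdeg {..<n} (F ^^ k)" and deg_F_ge: "1 \<le> fdeg {..<n} F"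
    by (auto intro: fdeg_ge_1)
  moreover from deg_F_ge have "fdeg {..<n} F powr \<gamma> \<le> (real (k + 1) + 3 / sqrt (real n)) powr \<gamma>"
    and "0 < fdeg {..<n} F powr \<gamma>"
    using deg_F \<gamma> by (auto intro: powr_mono2)
  ultimately have "real m ^ (2 * 2 ^ k - 2) / real n / (real (k + 1) + 3 / sqrt (real n)) powr \<gamma>
      \<le> fdeg {..<n} (F ^^ k) / fdeg {..<n} F powr \<gamma>"
    using deg_Fk by (intro frac_le) auto
  then show ?thesis
    using F by (intro exI[of _ "{..<n}"] exI[of _ F]) simp
qed

section \<open>Asymptotics of the lower bound\<close>

lemma tendsto_nat_floor_div_self:
  fixes f :: "'a \<Rightarrow> real"
  assumes "filterlim f at_top F"
  shows "((\<lambda>x. real (nat \<lfloor>f x\<rfloor>) / f x) \<longlongrightarrow> 1) F"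
proof -
  have "((\<lambda>y::real. real (nat \<lfloor>y\<rfloor>) / y) \<longlongrightarrow> 1) at_top"
    by real_asymp
  from filterlim_compose[OF this assms] show ?thesis .
qed

lemma nat_floor_root_power_le:
  assumes "0 < d"
  shows "nat \<lfloor>real n powr (1 / real d)\<rfloor> ^ d \<le> n"
proof -
  have "real (nat \<lfloor>real n powr (1 / real d)\<rfloor>) ^ d \<le> (real n powr (1 / real d)) ^ d"
    by (intro power_mono) auto
  also have "\<dots> = real n"
    using assms by (cases "n = 0") (simp_all add: powr_power)
  finally show ?thesis
    by (simp only: of_nat_power[symmetric] of_nat_le_iff)
qed

lemma root_power_eq:
  fixes k n :: nat
  assumes "1 \<le> k" "0 < n"
  shows "(real n powr (1 / 2 ^ k)) ^ (2 * 2 ^ k - 2) = real n * real n powr (1 - 1 / 2 ^ (k - 1))"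
proof -
  obtain j where k: "k = Suc j"
    using assms(1) by (cases k) auto
  have "real (2 * 2 ^ k - 2 :: nat) = 4 * 2 ^ j - 2"
    by (simp add: k of_nat_diff)
  then have "real (2 * 2 ^ k - 2 :: nat) * (1 / 2 ^ k) = 1 + (1 - 1 / 2 ^ (k - 1))"
    by (simp add: k field_simps)
  then show ?thesis
    using assms(2) by (simp only: powr_power powr_mult_base)
qed

lemma floor_root_error_tendsto_zero:
  fixes k :: nat and \<gamma> :: real
  defines "x \<equiv> \<lambda>n::nat. real n powr (1 / 2 ^ k)"
  defines "c \<equiv> \<lambda>n::nat. real (k + 1) + 3 / sqrt (real n)"
  shows "(\<lambda>n. if k + 1 \<le> nat \<lfloor>x n\<rfloor>
      then (real (nat \<lfloor>x n\<rfloor>) / x n) ^ (2 * 2 ^ k - 2) * (real (k + 1) / c n) powr \<gamma> - 1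
      else -1) \<longlonglongrightarrow> 0"
proof -
  have x_top: "filterlim x at_top sequentially"
    unfolding x_def by real_asymp
  have "(\<lambda>n. real (k + 1) / c n) \<longlonglongrightarrow> 1"
    unfolding c_def by real_asymp
  from tendsto_powr[OF this tendsto_const[of \<gamma>]]
  have "(\<lambda>n. (real (k + 1) / c n) powr \<gamma>) \<longlonglongrightarrow> 1"
    by simp
  from tendsto_mult[OF tendsto_power[OF tendsto_nat_floor_div_self[OF x_top]] this]
  have lim: "(\<lambda>n. (real (nat \<lfloor>x n\<rfloor>) / x n) ^ (2 * 2 ^ k - 2) * (real (k + 1) / c n) powr \<gamma> - 1)
    \<longlonglongrightarrow> 0"
    by (simp add: LIM_zero)
  have "eventually (\<lambda>n. real (k + 1) \<le> x n) sequentially"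
    using x_top by (simp add: filterlim_at_top)
  then have "eventually (\<lambda>n. k + 1 \<le> nat \<lfloor>x n\<rfloor>) sequentially"
    by eventually_elim (simp add: le_nat_floor)
  then show ?thesis
    by (rule Lim_transform_eventually[OF lim eventually_mono]) simp
qed

lemma fdeg_ratio_lower_bound_asymptotic:
  fixes k :: nat and \<gamma> :: real
  assumes k: "1 \<le> k" and \<gamma>: "0 \<le> \<gamma>"
  shows "\<exists>e :: nat \<Rightarrow> real. e \<longlonglongrightarrow> 0 \<and>
    (\<forall>n\<ge>1. \<exists>(X :: nat set) f. finite X \<and> card X = n \<and> f ` X \<subseteq> X \<and>
       fdeg X (f ^^ k) / fdeg X f powr \<gamma>
         \<ge> (1 + e n) / real (k + 1) powr \<gamma> * real n powr (1 - 1 / 2 ^ (k - 1)))"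
proof -
  define x where "x n = real n powr (1 / 2 ^ k)" for n :: nat
  define m where "m n = nat \<lfloor>x n\<rfloor>" for n
  define c where "c n = real (k + 1) + 3 / sqrt (real n)" for n :: nat
  \<comment> \<open>For the finitely many \<open>n\<close> with \<open>m n \<le> k\<close> the bound is made trivial by \<open>e n = -1\<close>.\<close>
  define e where "e n = (if k + 1 \<le> m n
    then (real (m n) / x n) ^ (2 * 2 ^ k - 2) * (real (k + 1) / c n) powr \<gamma> - 1 else -1)" for n
  have "e \<longlonglongrightarrow> 0"
    using floor_root_error_tendsto_zero[of k \<gamma>]
    unfolding e_def[abs_def] m_def[abs_def] x_def[abs_def] c_def[abs_def] .
  moreover have "\<exists>(X :: nat set) f. finite X \<and> card X = n \<and> f ` X \<subseteq> X \<and>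
       fdeg X (f ^^ k) / fdeg X f powr \<gamma>
         \<ge> (1 + e n) / real (k + 1) powr \<gamma> * real n powr (1 - 1 / 2 ^ (k - 1))"
    if n: "1 \<le> n" for n
  proof (cases "k + 1 \<le> m n")
    case True
    have m_n: "m n ^ 2 ^ k \<le> n"
      using nat_floor_root_power_le[of "2 ^ k" n] by (simp add: m_def x_def)
    have c_pos: "0 < c n"
      by (simp add: c_def add_pos_nonneg)
    have "1 + e n
        = real (m n) ^ (2 * 2 ^ k - 2) / x n ^ (2 * 2 ^ k - 2) * (real (k + 1) powr \<gamma> / c n powr \<gamma>)"
      using True c_pos by (simp add: e_def power_divide powr_divide)
    also have "x n ^ (2 * 2 ^ k - 2) = real n * real n powr (1 - 1 / 2 ^ (k - 1))"
      unfolding x_def using root_power_eq[OF k] n by simp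
    finally have "(1 + e n) / real (k + 1) powr \<gamma> * real n powr (1 - 1 / 2 ^ (k - 1))
        = real (m n) ^ (2 * 2 ^ k - 2) / real n / c n powr \<gamma>"
      using n by (simp add: field_simps)
    moreover have "c n = real (k + 1) + 3 / sqrt (real n)"
      by (simp add: c_def)
    ultimately show ?thesis
      using exists_fdeg_ratio_ge[OF k \<gamma> True m_n] by (simp only:)
  next
    case False
    have "0 \<le> fdeg {..<n} (id ^^ k) / fdeg {..<n} id powr \<gamma>"
      by (intro divide_nonneg_nonneg) (simp_all add: fdeg_def sum_nonneg)
    then show ?thesis
      using False by (intro exI[of _ "{..<n}"] exI[of _ id]) (simp add: e_def)
  qed
  ultimately show ?thesis
    by blast
qed

theorem mainTheorem1:
  fixes k :: nat and \<gamma> :: real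
  assumes "k \<ge> 2" and "\<gamma> \<ge> 0"
  shows "(\<exists>e :: nat \<Rightarrow> real. e \<longlonglongrightarrow> 0 \<and>
           (\<forall>n\<ge>1. \<exists>(X :: nat set) f. finite X \<and> card X = n \<and> f ` X \<subseteq> X \<and>
              fdeg X (f ^^ k) / fdeg X f powr \<gamma>
                \<ge> (1 + e n) / real (k + 1) powr \<gamma> * real n powr (1 - 1 / 2 ^ (k - 1))))
       \<and> (\<gamma> \<ge> 2 - 1 / 2 ^ (k - 1) \<longrightarrow>
           (\<forall>(X :: 'a set) f. finite X \<and> X \<noteq> {} \<and> f ` X \<subseteq> X \<longrightarrow>
              fdeg X (f ^^ k) / fdeg X f powr \<gamma>
                \<le> real (card X) powr (1 - 1 / 2 ^ (k - 1))))"
proof -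
  have k: "1 \<le> k"
    using assms(1) by simp
  show ?thesis
    using fdeg_ratio_lower_bound_asymptotic[OF k assms(2)] fdeg_funpow_ratio_le[OF k] by blast
qed

end
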